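(* Let $m\ge1$ and let $G$ be a strongly regular graph with parameters $P_+(m)$ or $P_-(m)$ and 2-rank $r$. Let $x$ be a vertex of $G$ and let $G'$ be obtained from $G$ by Seidel switching with respect to the set of neighbours of $x$, and let $G''$ be $G'$ with the (isolated) vertex $x$ deleted. Then $G''$ has 2-rank $r-2$ if $\mathbf{1}\in\mathrm{Col}_2(G)$, and 2-rank $r$ otherwise. (When $G''$ is strongly regular with parameters $P_0(m)$, this yields an SRG with parameters $P_0(m)$ of 2-rank $r-2$ or $r$ accordingly.)
   Context: $P_0(m)=(2^{2m}-1,2^{2m-1},2^{2m-2},2^{2m-2})$, $P_\pm(m)=(2^{2m},2^{2m-1}\pm2^{m-1},2^{2m-2}\pm2^{m-1},2^{2m-2}\pm2^{m-1})$. The 2-rank of a graph is the rank over $\mathbb{F}_2$ of its adjacency matrix; $\mathrm{Col}_2(G)$ is the $\mathbb{F}_2$-column space of the adjacency matrix of $G$, and $\mathbf{1}$ is the all-ones vector. Seidel switching with respect to a vertex set $X$ removes all edges between $X$ and its complement and adds all previously absent edges between $X$ and its complement, leaving other adjacencies unchanged. *)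

theory Defs
  imports Complex_Main "HOL-Library.Function_Algebras" "HOL-Library.Z2"
begin

definition simple_graph :: "'a set \<Rightarrow> ('a \<Rightarrow> 'a \<Rightarrow> bool) \<Rightarrow> bool" where
  "simple_graph V adj \<longleftrightarrow> finite V \<and> (\<forall>x y. adj x y \<longrightarrow> x \<in> V \<and> y \<in> V)
     \<and> (\<forall>x y. adj x y \<longrightarrow> adj y x) \<and> (\<forall>x. \<not> adj x x)"

definition nbrs :: "'a set \<Rightarrow> ('a \<Rightarrow> 'a \<Rightarrow> bool) \<Rightarrow> 'a \<Rightarrow> 'a set" where
  "nbrs V adj x = {y \<in> V. adj x y}"

definition srg :: "'a set \<Rightarrow> ('a \<Rightarrow> 'a \<Rightarrow> bool) \<Rightarrow> nat \<Rightarrow> nat \<Rightarrow> nat \<Rightarrow> nat \<Rightarrow> bool" where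
  "srg V adj v k l mu \<longleftrightarrow> simple_graph V adj \<and> card V = v
     \<and> (\<forall>x\<in>V. card (nbrs V adj x) = k)
     \<and> (\<forall>x\<in>V. \<forall>y\<in>V. adj x y \<longrightarrow> card (nbrs V adj x \<inter> nbrs V adj y) = l)
     \<and> (\<forall>x\<in>V. \<forall>y\<in>V. x \<noteq> y \<longrightarrow> \<not> adj x y \<longrightarrow> card (nbrs V adj x \<inter> nbrs V adj y) = mu)"

definition srg_P_plus :: "'a set \<Rightarrow> ('a \<Rightarrow> 'a \<Rightarrow> bool) \<Rightarrow> nat \<Rightarrow> bool" where
  "srg_P_plus V adj m \<longleftrightarrow> srg V adj (2^(2*m)) (2^(2*m-1) + 2^(m-1))
      (2^(2*m-2) + 2^(m-1)) (2^(2*m-2) + 2^(m-1))"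

definition srg_P_minus :: "'a set \<Rightarrow> ('a \<Rightarrow> 'a \<Rightarrow> bool) \<Rightarrow> nat \<Rightarrow> bool" where
  "srg_P_minus V adj m \<longleftrightarrow> srg V adj (2^(2*m)) (2^(2*m-1) - 2^(m-1))
      (2^(2*m-2) - 2^(m-1)) (2^(2*m-2) - 2^(m-1))"

definition srg_P_zero :: "'a set \<Rightarrow> ('a \<Rightarrow> 'a \<Rightarrow> bool) \<Rightarrow> nat \<Rightarrow> bool" where
  "srg_P_zero V adj m \<longleftrightarrow> srg V adj (2^(2*m) - 1) (2^(2*m-1)) (2^(2*m-2)) (2^(2*m-2))"

text \<open>Vectors over GF(2) indexed by vertices: functions 'a \<Rightarrow> bit (zero outside V).\<close>
definition f2scale :: "bit \<Rightarrow> ('a \<Rightarrow> bit) \<Rightarrow> ('a \<Rightarrow> bit)" where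
  "f2scale c f = (\<lambda>x. c * f x)"

definition adj_col :: "'a set \<Rightarrow> ('a \<Rightarrow> 'a \<Rightarrow> bool) \<Rightarrow> 'a \<Rightarrow> ('a \<Rightarrow> bit)" where
  "adj_col V adj y = (\<lambda>x. if x \<in> V \<and> y \<in> V \<and> adj x y then 1 else 0)"

definition Col2 :: "'a set \<Rightarrow> ('a \<Rightarrow> 'a \<Rightarrow> bool) \<Rightarrow> ('a \<Rightarrow> bit) set" where
  "Col2 V adj = module.span f2scale (adj_col V adj ` V)"

definition rank2 :: "'a set \<Rightarrow> ('a \<Rightarrow> 'a \<Rightarrow> bool) \<Rightarrow> nat" where
  "rank2 V adj = vector_space.dim f2scale (Col2 V adj)"

definition ones :: "'a set \<Rightarrow> ('a \<Rightarrow> bit)" where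
  "ones V = (\<lambda>x. if x \<in> V then 1 else 0)"

definition seidel_switch :: "'a set \<Rightarrow> ('a \<Rightarrow> 'a \<Rightarrow> bool) \<Rightarrow> 'a set \<Rightarrow> 'a \<Rightarrow> 'a \<Rightarrow> bool" where
  "seidel_switch V adj X x y \<longleftrightarrow> x \<in> V \<and> y \<in> V \<and> x \<noteq> y \<and>
     (if (x \<in> X) = (y \<in> X) then adj x y else \<not> adj x y)"

definition induced :: "'a set \<Rightarrow> ('a \<Rightarrow> 'a \<Rightarrow> bool) \<Rightarrow> 'a \<Rightarrow> 'a \<Rightarrow> bool" where
  "induced W adj x y \<longleftrightarrow> x \<in> W \<and> y \<in> W \<and> adj x y"

end

theory Submission
  imports Defs
begin

text \<open>Let a y and b y be the columns of y in the adjacency matrices of G and G'' (the latter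
extended by 0 at x), and let 1 be the all-ones vector. Over GF(2), b y = a y + a x + a y x \<cdot> 1
for y \<noteq> x, so span {1, a y} = span {1, a x, b y}, and 1 is not in span {a x, b y} because all
these vectors vanish at x. If 1 = A c, the functional w \<mapsto> c \<cdot> w is 1 on every a y and 0 on 1,
since c \<cdot> A c = 0 for a symmetric matrix with zero diagonal; so it kills every b y but not a x,
and the rank drops by two. Otherwise, as Col A is the orthogonal complement of ker A, some c in
ker A has odd weight, and then the sum of c y \<cdot> b y over y \<noteq> x equals a x, so the rank is
unchanged.\<close>

text \<open>Keep + and * on bit as field operations instead of letting simp turn them into xor/and.\<close>

declare add_bit_eq_xor[simp del] mult_bit_eq_and[simp del]

lemma bit_add_self [simp]: "(b::bit) + b = 0"
  by (cases b) simp_all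

interpretation F: vector_space f2scale
  by unfold_locales (auto simp: f2scale_def fun_eq_iff algebra_simps)

interpretation B: vector_space "(*) :: bit \<Rightarrow> bit \<Rightarrow> bit"
  by unfold_locales (auto simp: algebra_simps)

interpretation FB: vector_space_pair f2scale "(*) :: bit \<Rightarrow> bit \<Rightarrow> bit" ..

lemma f2scale_apply [simp]: "f2scale c f u = c * f u"
  by (simp add: f2scale_def)

lemma sum_fun_apply: "(sum f A) u = (\<Sum>a\<in>A. f a u)"
  by (induction A rule: infinite_finite_induct) auto

lemma span_image_eq_lincombs:
  assumes "finite V"
  shows "F.span (g ` V) = range (\<lambda>c. \<Sum>v\<in>V. f2scale (c v) (g v))"
proof
  have "F.subspace (range (\<lambda>c. \<Sum>v\<in>V. f2scale (c v) (g v)))"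
  proof (rule F.subspaceI)
    show "0 \<in> range (\<lambda>c. \<Sum>v\<in>V. f2scale (c v) (g v))"
      by (rule image_eqI[of _ _ "\<lambda>_. 0"]) (auto simp: fun_eq_iff sum_fun_apply)
  next
    fix w1 w2 assume "w1 \<in> range (\<lambda>c. \<Sum>v\<in>V. f2scale (c v) (g v))"
      "w2 \<in> range (\<lambda>c. \<Sum>v\<in>V. f2scale (c v) (g v))"
    then obtain c d where "w1 = (\<Sum>v\<in>V. f2scale (c v) (g v))" "w2 = (\<Sum>v\<in>V. f2scale (d v) (g v))"
      by auto
    then show "w1 + w2 \<in> range (\<lambda>c. \<Sum>v\<in>V. f2scale (c v) (g v))"
      by (intro image_eqI[of _ _ "\<lambda>v. c v + d v"])
         (simp_all add: F.scale_left_distrib sum.distrib)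
  next
    fix k w assume "w \<in> range (\<lambda>c. \<Sum>v\<in>V. f2scale (c v) (g v))"
    then obtain c where "w = (\<Sum>v\<in>V. f2scale (c v) (g v))" by auto
    then show "f2scale k w \<in> range (\<lambda>c. \<Sum>v\<in>V. f2scale (c v) (g v))"
      by (intro image_eqI[of _ _ "\<lambda>v. k * c v"]) (simp_all add: F.scale_sum_right)
  qed
  moreover have "g y \<in> range (\<lambda>c. \<Sum>v\<in>V. f2scale (c v) (g v))" if "y \<in> V" for y
    by (rule image_eqI[of _ _ "\<lambda>v. if v = y then 1 else 0"])
       (simp_all add: if_distrib[of "\<lambda>c. f2scale c _"] F.scale_zero_left assms that cong: if_cong)
  ultimately show "F.span (g ` V) \<subseteq> range (\<lambda>c. \<Sum>v\<in>V. f2scale (c v) (g v))"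
    by (intro F.span_minimal) auto
next
  show "range (\<lambda>c. \<Sum>v\<in>V. f2scale (c v) (g v)) \<subseteq> F.span (g ` V)"
    by (auto intro!: F.span_sum F.span_scale intro: F.span_base)
qed

lemma linear_functional_separating:
  assumes "w \<notin> F.span S"
  obtains h where "Vector_Spaces.linear f2scale (*) h" "\<And>s. s \<in> S \<Longrightarrow> h s = 0" "h w = 1"
proof -
  obtain B where B: "B \<subseteq> S" "F.independent B" "S \<subseteq> F.span B"
    by (rule F.maximal_independent_subset)
  have "w \<notin> F.span B"
    using assms B(1) F.span_mono by blast
  then have "F.independent (insert w B)" "w \<notin> B"
    using B(2) F.independent_insertI F.span_base by blast+
  then obtain h where h: "Vector_Spaces.linear f2scale (*) h"
      "\<forall>v\<in>insert w B. h v = (if v = w then 1 else 0)"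
    using FB.linear_independent_extend[of _ "\<lambda>v. if v = w then 1 else 0"] by blast
  have "h b = 0" if "b \<in> B" for b
    using h(2) \<open>w \<notin> B\<close> that by auto
  then have "h s = 0" if "s \<in> S" for s
    using FB.linear_eq_0_on_span[OF h(1)] B(3) that by blast
  with h that show ?thesis by auto
qed

lemma linear_functional_eq_sum:
  assumes h: "Vector_Spaces.linear f2scale (*) h" and "finite V" and w: "\<And>u. u \<notin> V \<Longrightarrow> w u = 0"
  shows "h w = (\<Sum>v\<in>V. w v * h (\<lambda>u. if u = v then 1 else 0))"
proof -
  have "w = (\<Sum>v\<in>V. f2scale (w v) (\<lambda>u. if u = v then 1 else 0))"
    using assms(2) w by (auto simp: fun_eq_iff sum_fun_apply if_distrib[of "(*) _"] cong: if_cong)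
  then have "h w = h (\<Sum>v\<in>V. f2scale (w v) (\<lambda>u. if u = v then 1 else 0))" by simp
  then show ?thesis
    by (simp only: FB.linear_sum[OF h] FB.linear_scale[OF h])
qed

lemma dim_insert_finite:
  assumes "finite S"
  shows "F.dim (insert v S) = (if v \<in> F.span S then F.dim S else Suc (F.dim S))"
proof (cases "v \<in> F.span S")
  case True
  then show ?thesis
    by (metis F.dim_span F.span_redundant)
next
  case False
  obtain B where B: "B \<subseteq> S" "F.independent B" "S \<subseteq> F.span B"
    by (rule F.maximal_independent_subset)
  have span_B: "F.span B = F.span S"
    using B(1,3) F.span_mono F.span_span by (metis subset_antisym)
  with False have "v \<notin> F.span B" "v \<notin> B"
    using F.span_base by auto
  then have "F.dim (insert v S) = card (insert v B)"
    using F.dim_span_eq_card_independent[OF F.independent_insertI[OF _ B(2)]] span_B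
    by (metis F.dim_span F.span_insert)
  also have "\<dots> = Suc (F.dim S)"
    using B assms \<open>v \<notin> B\<close> span_B F.dim_span_eq_card_independent
    by (metis F.dim_span card_insert_disjoint finite_subset)
  finally show ?thesis
    using False by simp
qed

lemma odd_kernel_vector_if_ones_notin_span:
  fixes g :: "'a \<Rightarrow> 'a \<Rightarrow> bit"
  assumes fin: "finite V" and g_sym: "\<And>u v. g v u = g u v"
    and supp: "\<And>u v. u \<notin> V \<Longrightarrow> g v u = 0" and ones_notin: "ones V \<notin> F.span (g ` V)"
  obtains c where "(\<Sum>v\<in>V. f2scale (c v) (g v)) = 0" "(\<Sum>v\<in>V. c v) = 1"
proof -
  obtain h where h: "Vector_Spaces.linear f2scale (*) h" "\<And>s. s \<in> g ` V \<Longrightarrow> h s = 0"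
      "h (ones V) = 1"
    using linear_functional_separating[OF ones_notin] by blast
  define c where "c v = h (\<lambda>u. if u = v then 1 else 0)" for v
  have "(\<Sum>v\<in>V. f2scale (c v) (g v)) u = 0" for u
  proof (cases "u \<in> V")
    case True
    have "(\<Sum>v\<in>V. f2scale (c v) (g v)) u = (\<Sum>v\<in>V. g u v * c v)"
      by (simp add: sum_fun_apply g_sym mult.commute)
    also have "\<dots> = h (g u)"
      unfolding c_def by (rule linear_functional_eq_sum[OF h(1) fin supp, symmetric])
    also have "\<dots> = 0"
      using h(2) True by blast
    finally show ?thesis .
  qed (simp add: sum_fun_apply supp)
  moreover have "(\<Sum>v\<in>V. c v) = 1"
    using linear_functional_eq_sum[OF h(1) fin, of "ones V"] h(3)
    by (simp add: ones_def c_def cong: if_cong)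
  ultimately show ?thesis
    by (intro that[of c] ext) simp_all
qed

lemma alternating_form_eq_0:
  fixes M :: "'a \<Rightarrow> 'a \<Rightarrow> bit"
  assumes "finite V" "\<And>u v. M u v = M v u" "\<And>u. M u u = 0"
  shows "(\<Sum>u\<in>V. \<Sum>v\<in>V. c u * c v * M u v) = 0"
  using assms(1)
proof (induction V rule: finite_induct)
  case (insert w V)
  have "(\<Sum>u\<in>V. c u * c w * M u w) = (\<Sum>v\<in>V. c w * c v * M w v)"
    by (intro sum.cong refl) (metis assms(2) mult.commute)
  then show ?case
    by (simp add: sum.distrib insert assms(3) add.assoc)
qed simp

lemma span_vanishing_at:
  assumes "\<And>s. s \<in> S \<Longrightarrow> s u = 0" "w \<in> F.span S"
  shows "w u = 0"
proof -
  have "F.subspace {w. w u = 0}"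
    by (rule F.subspaceI) auto
  then have "F.span S \<subseteq> {w. w u = 0}"
    using assms(1) by (intro F.span_minimal) auto
  then show ?thesis
    using assms(2) by auto
qed

lemma bit_add_swap: "(p::bit) = q + r \<Longrightarrow> q = p + r"
  by (cases r) simp_all

locale vertex_switching =
  fixes V :: "'a set" and adj :: "'a \<Rightarrow> 'a \<Rightarrow> bool" and x :: 'a
  assumes graph: "simple_graph V adj" and vertex: "x \<in> V"
begin

abbreviation col :: "'a \<Rightarrow> 'a \<Rightarrow> bit" where
  "col \<equiv> adj_col V adj"

abbreviation col'' :: "'a \<Rightarrow> 'a \<Rightarrow> bit" where
  "col'' \<equiv> adj_col (V - {x}) (induced (V - {x}) (seidel_switch V adj (nbrs V adj x)))"

lemma finite_vertices: "finite V"
  using graph by (simp add: simple_graph_def)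

lemma col_sym: "col v u = col u v"
  using graph by (auto simp: simple_graph_def adj_col_def)

lemma col_outside: "u \<notin> V \<Longrightarrow> col v u = 0"
  by (simp add: adj_col_def)

lemma col_diag: "col u u = 0"
  using graph by (simp add: simple_graph_def adj_col_def)

lemma col''_eq:
  assumes "y \<in> V - {x}"
  shows "col'' y = col y + col x + f2scale (col y x) (ones V)"
  using graph vertex assms
  by (auto simp: fun_eq_iff adj_col_def induced_def seidel_switch_def nbrs_def ones_def simple_graph_def)

lemma col_eq:
  assumes "y \<in> V - {x}"
  shows "col y = col'' y + col x + f2scale (col y x) (ones V)"
  using col''_eq[OF assms] by (auto simp: fun_eq_iff add.assoc intro: bit_add_swap)

lemma span_ones_cols:
  "F.span (insert (ones V) (col ` V)) = F.span (insert (ones V) (insert (col x) (col'' ` (V - {x}))))"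
proof -
  have "col y \<in> F.span (insert (ones V) (insert (col x) (col'' ` (V - {x}))))" if "y \<in> V" for y
  proof (cases "y = x")
    case False
    with that have "y \<in> V - {x}"
      by simp
    then show ?thesis
      by (subst col_eq[OF \<open>y \<in> V - {x}\<close>]) (intro F.span_add F.span_scale F.span_base, auto)
  qed (auto intro: F.span_base)
  moreover have "col'' y \<in> F.span (insert (ones V) (col ` V))" if "y \<in> V - {x}" for y
    unfolding col''_eq[OF that] using that vertex by (intro F.span_add F.span_scale F.span_base) auto
  ultimately show ?thesis
    unfolding F.span_eq using vertex by (auto intro: F.span_base)
qed

lemma ones_notin_span_col_x_col'':
  "ones V \<notin> F.span (insert (col x) (col'' ` (V - {x})))"
proof
  assume "ones V \<in> F.span (insert (col x) (col'' ` (V - {x})))"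
  then have "ones V x = 0"
    by (rule span_vanishing_at[rotated]) (use graph in \<open>auto simp: adj_col_def simple_graph_def\<close>)
  then show False
    using vertex by (simp add: ones_def)
qed

lemma col_x_notin_span_col'':
  assumes "ones V \<in> F.span (col ` V)"
  shows "col x \<notin> F.span (col'' ` (V - {x}))"
proof
  obtain c where c: "ones V = (\<Sum>v\<in>V. f2scale (c v) (col v))"
    using assms span_image_eq_lincombs[OF finite_vertices] by auto
  define \<phi> where "\<phi> w = (\<Sum>v\<in>V. c v * w v)" for w :: "'a \<Rightarrow> bit"
  have \<phi>_add: "\<phi> (w1 + w2) = \<phi> w1 + \<phi> w2" for w1 w2
    by (simp add: \<phi>_def distrib_left sum.distrib)
  have \<phi>_scale: "\<phi> (f2scale k w) = k * \<phi> w" for k w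
    unfolding \<phi>_def f2scale_apply sum_distrib_left by (rule sum.cong) (simp_all add: mult.left_commute)
  have \<phi>_col: "\<phi> (col y) = 1" if "y \<in> V" for y
  proof -
    have "\<phi> (col y) = ones V y"
      by (simp add: \<phi>_def c sum_fun_apply col_sym)
    then show ?thesis
      using that by (simp add: ones_def)
  qed
  have "\<phi> (ones V) = (\<Sum>v\<in>V. c v * (\<Sum>u\<in>V. c u * col u v))"
    unfolding \<phi>_def by (subst c) (simp add: sum_fun_apply)
  also have "\<dots> = (\<Sum>v\<in>V. \<Sum>u\<in>V. c v * c u * col u v)"
    by (simp only: sum_distrib_left mult.assoc)
  also have "\<dots> = 0"
    by (rule alternating_form_eq_0[OF finite_vertices]) (simp_all add: col_sym col_diag)
  finally have \<phi>_ones: "\<phi> (ones V) = 0" .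
  have "\<phi> (col'' y) = 0" if "y \<in> V - {x}" for y
    using that vertex by (simp add: col''_eq \<phi>_add \<phi>_scale \<phi>_col \<phi>_ones)
  moreover have "F.subspace {w. \<phi> w = 0}"
    by (rule F.subspaceI) (auto simp: \<phi>_add \<phi>_scale, simp add: \<phi>_def)
  ultimately have "F.span (col'' ` (V - {x})) \<subseteq> {w. \<phi> w = 0}"
    by (intro F.span_minimal) auto
  moreover assume "col x \<in> F.span (col'' ` (V - {x}))"
  ultimately show False
    using \<phi>_col[OF vertex] by auto
qed

lemma col_x_in_span_col'':
  assumes "ones V \<notin> F.span (col ` V)"
  shows "col x \<in> F.span (col'' ` (V - {x}))"
proof -
  obtain c where c0: "(\<Sum>v\<in>V. f2scale (c v) (col v)) = 0" and c1: "(\<Sum>v\<in>V. c v) = 1"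
    using odd_kernel_vector_if_ones_notin_span[OF finite_vertices col_sym col_outside assms] .
  have kernel: "(\<Sum>v\<in>V. c v * col v u) = 0" for u
    using fun_cong[OF c0, of u] by (simp add: sum_fun_apply)
  have "(\<Sum>v\<in>V - {x}. f2scale (c v) (col'' v)) u = col x u" for u
  proof -
    let ?t = "\<lambda>v. c v * (col v u + col x u + col v x * ones V u)"
    have "(\<Sum>v\<in>V - {x}. f2scale (c v) (col'' v)) u = (\<Sum>v\<in>V - {x}. ?t v)"
      by (simp add: sum_fun_apply col''_eq)
    also have "\<dots> = ?t x + (\<Sum>v\<in>V - {x}. ?t v)"
      by (simp add: col_diag)
    also have "\<dots> = (\<Sum>v\<in>V. ?t v)"
      by (rule sum.remove[OF finite_vertices vertex, symmetric])
    also have "\<dots> = (\<Sum>v\<in>V. c v * col v u) + (\<Sum>v\<in>V. c v) * col x u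
        + (\<Sum>v\<in>V. c v * col v x) * ones V u"
      by (simp only: distrib_left sum.distrib sum_distrib_right mult.assoc)
    also have "\<dots> = col x u"
      by (simp add: kernel c1)
    finally show ?thesis .
  qed
  then have "col x = (\<Sum>v\<in>V - {x}. f2scale (c v) (col'' v))"
    by auto
  also have "\<dots> \<in> F.span (col'' ` (V - {x}))"
    unfolding span_image_eq_lincombs[OF finite_Diff[OF finite_vertices]] by (rule rangeI)
  finally show ?thesis .
qed

lemma rank2_switch_delete:
  "if ones V \<in> Col2 V adj
   then rank2 (V - {x}) (induced (V - {x}) (seidel_switch V adj (nbrs V adj x))) + 2 = rank2 V adj
   else rank2 (V - {x}) (induced (V - {x}) (seidel_switch V adj (nbrs V adj x))) = rank2 V adj"
proof -
  let ?B = "col'' ` (V - {x})"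
  have rank: "rank2 V adj = F.dim (col ` V)"
    "rank2 (V - {x}) (induced (V - {x}) (seidel_switch V adj (nbrs V adj x))) = F.dim ?B"
    by (simp_all add: rank2_def Col2_def)
  have dim_eq: "F.dim (insert (ones V) (col ` V)) = F.dim (insert (ones V) (insert (col x) ?B))"
    by (metis F.dim_span span_ones_cols)
  have ones_B: "ones V \<notin> F.span ?B"
    using ones_notin_span_col_x_col'' F.span_mono[OF subset_insertI] by blast
  show ?thesis
  proof (cases "ones V \<in> Col2 V adj")
    case True
    then have "ones V \<in> F.span (col ` V)"
      by (simp add: Col2_def)
    with dim_eq have "F.dim (col ` V) = F.dim ?B + 2"
      by (simp add: dim_insert_finite finite_vertices ones_notin_span_col_x_col'' col_x_notin_span_col'')
    with True rank show ?thesis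
      by simp
  next
    case False
    then have ones: "ones V \<notin> F.span (col ` V)"
      by (simp add: Col2_def)
    have "col x \<in> F.span (insert (ones V) ?B)"
      using col_x_in_span_col''[OF ones] F.span_mono[OF subset_insertI] by blast
    then have "Suc (F.dim (col ` V)) = Suc (F.dim ?B)"
      using dim_eq ones ones_B
      by (simp add: dim_insert_finite finite_vertices insert_commute[of "ones V"])
    then have "F.dim (col ` V) = F.dim ?B"
      by simp
    with False rank show ?thesis
      by simp
  qed
qed

end

theorem mainTheorem8:
  fixes V :: "'a set" and adj :: "'a \<Rightarrow> 'a \<Rightarrow> bool" and m :: nat and x :: 'a
  assumes "m \<ge> 1"
    and "srg_P_plus V adj m \<or> srg_P_minus V adj m"
    and "x \<in> V"
  shows "let r = rank2 V adj;
             V'' = V - {x};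
             adj'' = induced V'' (seidel_switch V adj (nbrs V adj x))
         in (if ones V \<in> Col2 V adj then rank2 V'' adj'' + 2 = r
             else rank2 V'' adj'' = r)"
proof -
  have "simple_graph V adj"
    using assms(2) by (auto simp: srg_P_plus_def srg_P_minus_def srg_def)
  then interpret vertex_switching V adj x
    using assms(3) by unfold_locales
  show ?thesis
    using rank2_switch_delete by (simp add: Let_def)
qed

end
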